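(* Let $f\in\mathbb{R}[x,y]$ be a polynomial of degree $n\ge 3$ with homogeneous decomposition $f=\sum_{i=0}^n f_i$. If $f_n$ is hyperbolic or elliptic, then the Hessian curve $\{(x,y)\in\mathbb{R}^2:\mathrm{Hess}\,f(x,y)=0\}$ is compact. Moreover, the set $b^-\cap\mathbb{R}^2$ is hyperbolic (i.e. $\mathrm{Hess}\,f<0$ at each of its points) if $f_n$ is hyperbolic, and elliptic (i.e. $\mathrm{Hess}\,f>0$ at each of its points) if $f_n$ is elliptic.
   Context: $f_i$ denotes the homogeneous part of degree $i$ of $f$. $\mathrm{Hess}\,g=g_{xx}g_{yy}-g_{xy}^2$. A homogeneous polynomial $g\in\mathbb{R}[x,y]$ is hyperbolic (resp. elliptic) if $\mathrm{Hess}\,g$ has no real linear factors and is $\le 0$ (resp. $\ge 0$) everywhere on $\mathbb{R}^2$. Let $H_f\in\mathbb{R}[x,y,z]$ be the homogenization of $\mathrm{Hess}\,f$, i.e. $H_f(x,y,z)=z^{2n-4}\,\mathrm{Hess}\,f(x/z,y/z)$, a homogeneous polynomial of even degree $2n-4$ with $H_f(x,y,0)=\mathrm{Hess}\,f_n(x,y)$; its zero set in $\mathbb{RP}^2$ is the projective Hessian curve of $f$, and $\mathbb{R}^2$ is identified with $\{z\neq 0\}\subset\mathbb{RP}^2$ via $(x,y)\mapsto[x:y:1]$. The complement in $\mathbb{RP}^2$ of the projective Hessian curve is the disjoint union of two open sets $b^+$ and $b^-$, on each of which $H_f$ has constant sign, the two signs being opposite, where $b^+$ is orientable and $b^-$ is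 nonorientable. *)

theory Defs
  imports "HOL-Analysis.Analysis"
begin

text \<open>Bivariate real polynomials are represented by coefficient functions
  c :: nat => nat => real, where c i j is the coefficient of x^i y^j.
  A polynomial with all coefficients c i j (i + j > N) zero is evaluated by peval N.\<close>

type_synonym bpoly = "nat \<Rightarrow> nat \<Rightarrow> real"

definition peval :: "nat \<Rightarrow> bpoly \<Rightarrow> real \<Rightarrow> real \<Rightarrow> real" where
  "peval N c x y = (\<Sum>i\<le>N. \<Sum>j\<le>N - i. c i j * x ^ i * y ^ j)"

definition has_degree :: "bpoly \<Rightarrow> nat \<Rightarrow> bool" where
  "has_degree c n \<longleftrightarrow> (\<forall>i j. n < i + j \<longrightarrow> c i j = 0) \<and> (\<exists>i j. i + j = n \<and> c i j \<noteq> 0)"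

definition hom_part :: "bpoly \<Rightarrow> nat \<Rightarrow> bpoly" where
  "hom_part c k = (\<lambda>i j. if i + j = k then c i j else 0)"

definition pdx :: "bpoly \<Rightarrow> bpoly" where
  "pdx c = (\<lambda>i j. of_nat (Suc i) * c (Suc i) j)"

definition pdy :: "bpoly \<Rightarrow> bpoly" where
  "pdy c = (\<lambda>i j. of_nat (Suc j) * c i (Suc j))"

definition pmul :: "bpoly \<Rightarrow> bpoly \<Rightarrow> bpoly" where
  "pmul a b = (\<lambda>i j. \<Sum>k\<le>i. \<Sum>l\<le>j. a k l * b (i - k) (j - l))"

definition hess :: "bpoly \<Rightarrow> bpoly" where
  "hess c = (\<lambda>i j. pmul (pdx (pdx c)) (pdy (pdy c)) i j - pmul (pdx (pdy c)) (pdx (pdy c)) i j)"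

definition has_real_linear_factor :: "nat \<Rightarrow> bpoly \<Rightarrow> bool" where
  "has_real_linear_factor N h \<longleftrightarrow>
     (\<exists>a b M q. (a, b) \<noteq> (0, 0) \<and> (\<forall>x y. peval N h x y = (a * x + b * y) * peval M q x y))"

text \<open>Hyperbolic / elliptic homogeneous form g of degree k (Hess g has degree at most 2k).\<close>
definition hyperbolic_form :: "nat \<Rightarrow> bpoly \<Rightarrow> bool" where
  "hyperbolic_form k g \<longleftrightarrow> \<not> has_real_linear_factor (2 * k) (hess g)
      \<and> (\<forall>x y. peval (2 * k) (hess g) x y \<le> 0)"

definition elliptic_form :: "nat \<Rightarrow> bpoly \<Rightarrow> bool" where
  "elliptic_form k g \<longleftrightarrow> \<not> has_real_linear_factor (2 * k) (hess g)
      \<and> (\<forall>x y. peval (2 * k) (hess g) x y \<ge> 0)"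

definition homog :: "nat \<Rightarrow> bpoly \<Rightarrow> real \<times> real \<times> real \<Rightarrow> real" where
  "homog D h v = (case v of (x, y, z) \<Rightarrow>
      (\<Sum>i\<le>D. \<Sum>j\<le>D - i. h i j * x ^ i * y ^ j * z ^ (D - i - j)))"

definition Hproj :: "nat \<Rightarrow> bpoly \<Rightarrow> real \<times> real \<times> real \<Rightarrow> real" where
  "Hproj n c = homog (2 * n - 4) (hess c)"

text \<open>RP^2 is modelled as the unit sphere S^2 modulo the antipodal map; subsets of RP^2
  are represented by antipodally symmetric subsets of S^2.  An open subset U of RP^2 is
  nonorientable iff its orientation double cover, which is its preimage in S^2, has a
  connected component containing a pair of antipodal points.\<close>
definition nonorientable_rp2 :: "(real \<times> real \<times> real) set \<Rightarrow> bool" where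
  "nonorientable_rp2 S \<longleftrightarrow> (\<exists>v\<in>S. connected_component S v (- v))"

definition sign_region :: "nat \<Rightarrow> bpoly \<Rightarrow> real \<Rightarrow> (real \<times> real \<times> real) set" where
  "sign_region n c s = {v \<in> sphere 0 1. Hproj n c v \<noteq> 0 \<and> sgn (Hproj n c v) = s}"

definition bminus :: "nat \<Rightarrow> bpoly \<Rightarrow> (real \<times> real \<times> real) set" where
  "bminus n c = \<Union>{sign_region n c s | s. s \<in> {1, -1} \<and> nonorientable_rp2 (sign_region n c s)}"

text \<open>The affine chart embedding R^2 into RP^2, (x,y) |-> [x:y:1], as a point of S^2.\<close>
definition chart :: "real \<Rightarrow> real \<Rightarrow> real \<times> real \<times> real" where
  "chart x y = (1 / norm (x, y, 1::real)) *\<^sub>R (x, y, 1)"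

end

theory Submission
  imports Defs
begin

text \<open>Since f has degree n, the top-degree part of Hess f is Hess f_n, so H_f restricted
  to the line at infinity z = 0 is Hess f_n. A binary form with a nontrivial real zero has a
  real linear factor; hence if f_n is hyperbolic (elliptic), H_f is strictly negative (positive)
  on the whole line at infinity. The projective Hessian curve is then a compact set inside the
  affine chart z \<noteq> 0, so the affine Hessian curve is compact. The sign region of the opposite
  sign also avoids the line at infinity, and a connected subset of S^2 avoiding the equator
  cannot join a point to its antipode; so that region is orientable and b^- is the region
  carrying the sign of Hess f_n.\<close>

definition degree_le :: "bpoly \<Rightarrow> nat \<Rightarrow> bool" where
  "degree_le c m \<longleftrightarrow> (\<forall>i j. m < i + j \<longrightarrow> c i j = 0)"

lemma pdx_hom_part: "pdx (hom_part c (Suc m)) = hom_part (pdx c) m"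
  by (auto simp: pdx_def hom_part_def fun_eq_iff)

lemma pdy_hom_part: "pdy (hom_part c (Suc m)) = hom_part (pdy c) m"
  by (auto simp: pdy_def hom_part_def fun_eq_iff)

lemma degree_le_pdx: "degree_le c (Suc m) \<Longrightarrow> degree_le (pdx c) m"
  by (simp add: degree_le_def pdx_def)

lemma degree_le_pdy: "degree_le c (Suc m) \<Longrightarrow> degree_le (pdy c) m"
  by (simp add: degree_le_def pdy_def)

lemma pmul_hom_part:
  assumes a: "degree_le a m" and b: "degree_le b k"
  shows "pmul (hom_part a m) (hom_part b k) = hom_part (pmul a b) (m + k)"
proof (intro ext)
  fix i j
  have "hom_part a m p q * hom_part b k (i - p) (j - q) =
      (if i + j = m + k then a p q * b (i - p) (j - q) else 0)" if "p \<le> i" "q \<le> j" for p q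
  proof -
    consider "p + q = m" | "m < p + q" | "p + q < m" by linarith
    then show ?thesis
    proof cases
      case 3
      then have "i + j = m + k \<Longrightarrow> k < (i - p) + (j - q)" using that by linarith
      with 3 show ?thesis using b by (auto simp: hom_part_def degree_le_def)
    qed (use a that in \<open>auto simp: hom_part_def degree_le_def\<close>)
  qed
  then have "pmul (hom_part a m) (hom_part b k) i j =
      (\<Sum>p\<le>i. \<Sum>q\<le>j. if i + j = m + k then a p q * b (i - p) (j - q) else 0)"
    by (simp add: pmul_def)
  then show "pmul (hom_part a m) (hom_part b k) i j = hom_part (pmul a b) (m + k) i j"
    by (simp add: pmul_def hom_part_def)
qed

lemma hess_hom_part:
  assumes "degree_le c n" "2 \<le> n"
  shows "hess (hom_part c n) = hom_part (hess c) (2 * n - 4)"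
proof -
  obtain m where n: "n = Suc (Suc m)" using \<open>2 \<le> n\<close> by (metis add_2_eq_Suc le_Suc_ex)
  have "degree_le (pdx (pdx c)) m" "degree_le (pdy (pdy c)) m" "degree_le (pdx (pdy c)) m"
    using assms(1) by (simp_all add: n degree_le_pdx degree_le_pdy)
  then show ?thesis
    by (simp add: hess_def n pdx_hom_part pdy_hom_part pmul_hom_part fun_eq_iff)
       (simp add: hom_part_def)
qed

definition binary_form :: "nat \<Rightarrow> (nat \<Rightarrow> real) \<Rightarrow> real \<Rightarrow> real \<Rightarrow> real" where
  "binary_form D H x y = (\<Sum>i\<le>D. H i * x ^ i * y ^ (D - i))"

lemma peval_hom_part:
  assumes "D \<le> N"
  shows "peval N (hom_part h D) x y = binary_form D (\<lambda>i. h i (D - i)) x y"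
proof -
  have "(\<Sum>j\<le>N - i. hom_part h D i j * x ^ i * y ^ j) =
      (if i \<le> D then h i (D - i) * x ^ i * y ^ (D - i) else 0)" for i
  proof -
    have "(\<Sum>j\<le>N - i. hom_part h D i j * x ^ i * y ^ j) =
        (\<Sum>j\<le>N - i. if i \<le> D \<and> j = D - i then h i (D - i) * x ^ i * y ^ (D - i) else 0)"
      by (intro sum.cong) (auto simp: hom_part_def)
    then show ?thesis using assms by (simp add: diff_le_mono)
  qed
  then have "peval N (hom_part h D) x y = (\<Sum>i\<le>N. if i \<le> D then h i (D - i) * x ^ i * y ^ (D - i) else 0)"
    by (simp add: peval_def)
  also have "\<dots> = (\<Sum>i\<in>{..N} \<inter> {i. i \<le> D}. h i (D - i) * x ^ i * y ^ (D - i))"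
    by (simp add: sum.inter_restrict)
  also have "{..N} \<inter> {i. i \<le> D} = {..D}"
    using assms by auto
  finally show ?thesis by (simp add: binary_form_def)
qed

lemma homog_at_infinity: "homog D h (x, y, 0) = binary_form D (\<lambda>i. h i (D - i)) x y"
proof -
  have "(\<Sum>j\<le>D - i. h i j * x ^ i * y ^ j * 0 ^ (D - i - j)) = h i (D - i) * x ^ i * y ^ (D - i)"
    if "i \<le> D" for i
  proof -
    have "(\<Sum>j\<le>D - i. h i j * x ^ i * y ^ j * 0 ^ (D - i - j)) =
        (\<Sum>j\<le>D - i. if j = D - i then h i (D - i) * x ^ i * y ^ (D - i) else 0)"
      by (intro sum.cong) (auto simp: power_0_left)
    then show ?thesis by simp
  qed
  then show ?thesis by (simp add: homog_def binary_form_def)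
qed

lemma binary_form_scale: "binary_form D H (t * x) (t * y) = t ^ D * binary_form D H x y"
proof -
  have monomial: "H i * (t * x) ^ i * (t * y) ^ (D - i) = t ^ D * (H i * x ^ i * y ^ (D - i))"
    if "i \<le> D" for i
  proof -
    have "t ^ D = t ^ i * t ^ (D - i)"
      using that by (simp flip: power_add)
    then show ?thesis by (simp add: power_mult_distrib)
  qed
  show ?thesis
    unfolding binary_form_def sum_distrib_left by (intro sum.cong refl monomial) auto
qed

lemma peval_monomial:
  assumes "i + j \<le> M"
  shows "peval M (\<lambda>k l. if k = i \<and> l = j then w else 0) x y = w * x ^ i * y ^ j"
proof -
  have "(if k = i \<and> l = j then w else 0) * x ^ k * y ^ l =
      (if k = i \<and> l = j then w * x ^ i * y ^ j else 0)" for k l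
    by simp
  moreover have "(\<Sum>l\<le>M - k. if k = i \<and> l = j then w * x ^ i * y ^ j else 0) =
      (if k = i then w * x ^ i * y ^ j else 0)" for k
    using assms by (cases "k = i") simp_all
  ultimately show ?thesis
    using assms by (simp add: peval_def)
qed

lemma peval_monomial_sum:
  assumes "finite S" "\<forall>s\<in>S. e1 s + e2 s \<le> M"
  shows "\<exists>q. \<forall>x y. peval M q x y = (\<Sum>s\<in>S. w s * x ^ e1 s * y ^ e2 s)"
  using assms
proof (induction S rule: finite_induct)
  case empty
  show ?case by (intro exI[of _ "\<lambda>i j. 0"]) (simp add: peval_def)
next
  case (insert s S)
  then obtain q where q: "\<forall>x y. peval M q x y = (\<Sum>s\<in>S. w s * x ^ e1 s * y ^ e2 s)"
    by auto
  let ?m = "\<lambda>k l. if k = e1 s \<and> l = e2 s then w s else 0"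
  have "peval M (\<lambda>k l. q k l + ?m k l) x y = peval M q x y + peval M ?m x y" for x y
    by (simp add: peval_def distrib_right sum.distrib)
  then show ?case
    using insert q peval_monomial[of "e1 s" "e2 s" M "w s"] by (intro exI[of _ "\<lambda>k l. q k l + ?m k l"]) simp
qed

lemma binary_form_root_factor:
  assumes b: "b \<noteq> 0" and root: "binary_form D H a b = 0"
  shows "\<exists>q. \<forall>x y. binary_form D H x y = (b * x - a * y) * peval (D - 1) q x y"
proof -
  let ?S = "SIGMA i:{..D}. {..<i}"
  \<comment> \<open>coefficient of x^k y^(D-1-k) in the i-th term of (F(bx,by) - F(ay,by)) / (bx - ay), over b^D\<close>
  define w where "w = (\<lambda>(i, k). H i * b ^ (D - i + k) * a ^ (i - Suc k) / b ^ D)"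
  obtain q where q: "\<forall>x y. peval (D - 1) q x y = (\<Sum>s\<in>?S. w s * x ^ snd s * y ^ (D - 1 - snd s))"
    using peval_monomial_sum[of ?S snd "\<lambda>s. D - 1 - snd s" "D - 1" w] by auto
  have "b ^ D * binary_form D H x y = b ^ D * ((b * x - a * y) * peval (D - 1) q x y)" for x y
  proof -
    have "b ^ D * binary_form D H x y =
        binary_form D H (b * x) (b * y) - binary_form D H (y * a) (y * b)"
      using root by (simp add: binary_form_scale)
    also have "\<dots> = (\<Sum>i\<le>D. H i * (b * y) ^ (D - i) * ((b * x) ^ i - (a * y) ^ i))"
      by (simp add: binary_form_def sum_subtractf algebra_simps)
    also have "\<dots> = (b * x - a * y) *
        (\<Sum>i\<le>D. \<Sum>k<i. H i * (b * y) ^ (D - i) * (a * y) ^ (i - Suc k) * (b * x) ^ k)"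
      by (simp add: power_diff_sumr2 sum_distrib_left ac_simps)
    also have "(\<Sum>i\<le>D. \<Sum>k<i. H i * (b * y) ^ (D - i) * (a * y) ^ (i - Suc k) * (b * x) ^ k) =
        (\<Sum>(i, k)\<in>?S. H i * (b * y) ^ (D - i) * (a * y) ^ (i - Suc k) * (b * x) ^ k)"
      by (rule sum.Sigma) auto
    also have "\<dots> = b ^ D * (\<Sum>s\<in>?S. w s * x ^ snd s * y ^ (D - 1 - snd s))"
      unfolding sum_distrib_left
    proof (intro sum.cong refl)
      fix s assume "s \<in> ?S"
      then obtain i k where s: "s = (i, k)" "i \<le> D" "k < i" by auto
      then have "y ^ (D - 1 - k) = y ^ (D - i) * y ^ (i - Suc k)"
        unfolding power_add[symmetric] by (intro arg_cong[where f = "\<lambda>e. y ^ e"]) linarith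
      with b s show "(case s of (i, k) \<Rightarrow> H i * (b * y) ^ (D - i) * (a * y) ^ (i - Suc k) * (b * x) ^ k) =
          b ^ D * (w s * x ^ snd s * y ^ (D - 1 - snd s))"
        by (simp add: w_def power_mult_distrib power_add)
    qed
    finally show ?thesis using q by (simp add: ac_simps)
  qed
  with b show ?thesis by auto
qed

lemma binary_form_linear_factor:
  assumes ab: "(a, b) \<noteq> (0, 0)" and root: "binary_form D H a b = 0"
  shows "\<exists>\<alpha> \<beta> M q. (\<alpha>, \<beta>) \<noteq> (0, 0) \<and>
    (\<forall>x y. binary_form D H x y = (\<alpha> * x + \<beta> * y) * peval M q x y)"
proof (cases "b = 0")
  case False
  then obtain q where "\<forall>x y. binary_form D H x y = (b * x - a * y) * peval (D - 1) q x y"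
    using binary_form_root_factor root by blast
  with False show ?thesis
    by (intro exI[of _ b] exI[of _ "- a"] exI[of _ "D - 1"] exI[of _ q]) simp
next
  case True
  with ab have "a \<noteq> 0" by simp
  have split: "binary_form D H x y = H D * x ^ D + y * (\<Sum>i<D. H i * x ^ i * y ^ (D - 1 - i))" for x y
  proof -
    have "y ^ (D - i) = y * y ^ (D - 1 - i)" if "i < D" for i
      using that by (simp add: Suc_diff_Suc flip: power_Suc)
    then show ?thesis
      by (simp add: binary_form_def lessThan_Suc_atMost[symmetric] sum_distrib_left ac_simps)
  qed
  from root True split[of a 0] \<open>a \<noteq> 0\<close> have "H D = 0" by simp
  obtain q where "\<forall>x y. peval (D - 1) q x y = (\<Sum>i<D. H i * x ^ i * y ^ (D - 1 - i))"
    using peval_monomial_sum[of "{..<D}" id "\<lambda>i. D - 1 - i" "D - 1" H] by auto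
  with \<open>H D = 0\<close> split show ?thesis
    by (intro exI[of _ 0] exI[of _ 1] exI[of _ "D - 1"] exI[of _ q]) simp
qed

lemma peval_hom_part_nonzero:
  assumes "\<not> has_real_linear_factor N (hom_part h D)" "D \<le> N" "(x, y) \<noteq> (0, 0)"
  shows "peval N (hom_part h D) x y \<noteq> 0"
proof
  assume "peval N (hom_part h D) x y = 0"
  then have "binary_form D (\<lambda>i. h i (D - i)) x y = 0"
    using assms(2) by (simp add: peval_hom_part)
  from binary_form_linear_factor[OF assms(3) this] obtain \<alpha> \<beta> M q where "(\<alpha>, \<beta>) \<noteq> (0, 0)"
    and factor: "\<forall>u v. binary_form D (\<lambda>i. h i (D - i)) u v = (\<alpha> * u + \<beta> * v) * peval M q u v"
    by blast
  moreover have "\<forall>u v. peval N (hom_part h D) u v = (\<alpha> * u + \<beta> * v) * peval M q u v"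
    using factor assms(2) by (simp add: peval_hom_part)
  ultimately have "has_real_linear_factor N (hom_part h D)"
    unfolding has_real_linear_factor_def by blast
  with assms(1) show False ..
qed

lemma Hproj_at_infinity_sign:
  assumes deg: "degree_le c n" "2 \<le> n" and "(x, y) \<noteq> (0, 0)"
  shows "hyperbolic_form n (hom_part c n) \<Longrightarrow> Hproj n c (x, y, 0) < 0"
    and "elliptic_form n (hom_part c n) \<Longrightarrow> Hproj n c (x, y, 0) > 0"
proof -
  have Hproj: "Hproj n c (x, y, 0) = peval (2 * n) (hess (hom_part c n)) x y"
    using deg by (simp add: Hproj_def homog_at_infinity hess_hom_part peval_hom_part)
  have nonzero: "Hproj n c (x, y, 0) \<noteq> 0" if "\<not> has_real_linear_factor (2 * n) (hess (hom_part c n))"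
    unfolding Hproj hess_hom_part[OF deg] using that assms
    by (intro peval_hom_part_nonzero) (simp_all add: hess_hom_part[OF deg])
  show "hyperbolic_form n (hom_part c n) \<Longrightarrow> Hproj n c (x, y, 0) < 0"
    using nonzero by (simp add: hyperbolic_form_def Hproj less_le)
  show "elliptic_form n (hom_part c n) \<Longrightarrow> Hproj n c (x, y, 0) > 0"
    using nonzero by (simp add: elliptic_form_def Hproj less_le)
qed

lemma homog_scale: "homog D h (t * x, t * y, t) = t ^ D * peval D h x y"
proof -
  have monomial: "h i j * (t * x) ^ i * (t * y) ^ j * t ^ (D - i - j) = t ^ D * (h i j * x ^ i * y ^ j)"
    if "i \<le> D" "j \<le> D - i" for i j
  proof -
    have "t ^ D = t ^ i * t ^ j * t ^ (D - i - j)"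
      using that by (simp flip: power_add)
    then show ?thesis by (simp add: power_mult_distrib)
  qed
  show ?thesis
    unfolding homog_def peval_def sum_distrib_left prod.case by (intro sum.cong refl monomial) auto
qed

lemma norm_Pair_one_pos: "0 < norm (x, y, 1 :: real)"
  by (simp add: zero_prod_def)

lemma chart_eq: "chart x y = (x / norm (x, y, 1 :: real), y / norm (x, y, 1 :: real), 1 / norm (x, y, 1 :: real))"
  by (simp add: chart_def)

lemma chart_in_sphere: "chart x y \<in> sphere 0 1"
  unfolding chart_def mem_sphere_0 norm_scaleR using norm_Pair_one_pos[of x y] by simp

lemma sphere_at_infinity_nonzero: "(x, y, 0) \<in> sphere (0 :: real \<times> real \<times> real) 1 \<Longrightarrow> (x, y) \<noteq> (0, 0)"
  by auto

lemma Hproj_chart: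
  "Hproj n c (chart x y) = (1 / norm (x, y, 1 :: real)) ^ (2 * n - 4) * peval (2 * n - 4) (hess c) x y"
  using homog_scale[of "2 * n - 4" "hess c" "1 / norm (x, y, 1 :: real)" x y]
  by (simp add: Hproj_def chart_eq)

lemma chart_in_sign_region_iff:
  "chart x y \<in> sign_region n c s \<longleftrightarrow>
    peval (2 * n - 4) (hess c) x y \<noteq> 0 \<and> sgn (peval (2 * n - 4) (hess c) x y) = s"
  using norm_Pair_one_pos[of x y] chart_in_sphere[of x y]
  by (simp add: sign_region_def Hproj_chart sgn_mult)

lemma continuous_on_Hproj: "continuous_on A (Hproj n c)"
  unfolding Hproj_def homog_def case_prod_unfold by (intro continuous_intros)

definition chart_inv :: "real \<times> real \<times> real \<Rightarrow> real \<times> real" where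
  "chart_inv v = (fst v / snd (snd v), fst (snd v) / snd (snd v))"

lemma chart_inv_chart: "chart_inv (chart x y) = (x, y)"
proof -
  define r where "r = norm (x, y, 1 :: real)"
  have "r > 0" unfolding r_def by (rule norm_Pair_one_pos)
  moreover have "chart x y = (x / r, y / r, 1 / r)" unfolding r_def by (rule chart_eq)
  ultimately show ?thesis by (simp add: chart_inv_def)
qed

lemma compact_if_chart_into_affine_compact:
  assumes "closed Z" "compact K" "\<forall>v\<in>K. snd (snd v) \<noteq> 0"
    and "\<forall>(x, y)\<in>Z. chart x y \<in> K"
  shows "compact Z"
proof -
  have "compact (chart_inv ` K)"
    using assms(2,3) unfolding chart_inv_def by (intro compact_continuous_image continuous_intros) auto
  moreover have "Z \<subseteq> chart_inv ` K"
    using assms(4) by (force simp flip: chart_inv_chart)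
  ultimately show ?thesis
    using compact_Int_closed[OF _ assms(1)] by (metis inf.absorb2)
qed

lemma compact_Hessian_curve:
  assumes "\<forall>x y. (x, y) \<noteq> (0, 0) \<longrightarrow> Hproj n c (x, y, 0) \<noteq> 0"
  shows "compact {p :: real \<times> real. peval (2 * n - 4) (hess c) (fst p) (snd p) = 0}"
proof (rule compact_if_chart_into_affine_compact[where K = "sphere 0 1 \<inter> {v. Hproj n c v = 0}"])
  show "closed {p :: real \<times> real. peval (2 * n - 4) (hess c) (fst p) (snd p) = 0}"
    unfolding peval_def by (intro closed_Collect_eq continuous_intros)
  show "compact (sphere 0 1 \<inter> {v. Hproj n c v = 0})"
    by (intro compact_Int_closed compact_sphere closed_Collect_eq continuous_on_Hproj continuous_on_const)
  show "\<forall>v\<in>sphere 0 1 \<inter> {v. Hproj n c v = 0}. snd (snd v) \<noteq> 0"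
  proof (intro ballI notI)
    fix v assume v: "v \<in> sphere 0 1 \<inter> {v. Hproj n c v = 0}" "snd (snd v) = 0"
    then obtain x y where "v = (x, y, 0)" by (metis prod.collapse)
    with v assms sphere_at_infinity_nonzero[of x y] show False by auto
  qed
  show "\<forall>(x, y)\<in>{p. peval (2 * n - 4) (hess c) (fst p) (snd p) = 0}.
      chart x y \<in> sphere 0 1 \<inter> {v. Hproj n c v = 0}"
    using chart_in_sphere by (simp add: Hproj_chart)
qed

lemma not_nonorientable_rp2_if_affine:
  assumes "\<forall>v\<in>S. snd (snd v) \<noteq> 0"
  shows "\<not> nonorientable_rp2 S"
proof
  assume "nonorientable_rp2 S"
  then obtain v T where T: "connected T" "T \<subseteq> S" "v \<in> T" "- v \<in> T"
    unfolding nonorientable_rp2_def connected_component_def by blast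
  let ?e = "(0, 0, 1) :: real \<times> real \<times> real"
  have "\<exists>w\<in>T. ?e \<bullet> w = 0"
    using connected_ivt_hyperplane[OF T(1,3,4), of ?e 0] connected_ivt_hyperplane[OF T(1,4,3), of ?e 0]
    by (cases "?e \<bullet> v \<le> 0") auto
  with T(2) assms show False by (auto simp: inner_prod_def)
qed

lemma bminus_subset_sign_region:
  assumes \<sigma>: "\<sigma> \<in> {1, -1}" and at_infinity: "\<forall>x y. (x, y) \<noteq> (0, 0) \<longrightarrow> sgn (Hproj n c (x, y, 0)) = \<sigma>"
  shows "bminus n c \<subseteq> sign_region n c \<sigma>"
proof -
  have "\<forall>v\<in>sign_region n c (- \<sigma>). snd (snd v) \<noteq> 0"
  proof (intro ballI notI)
    fix v assume v: "v \<in> sign_region n c (- \<sigma>)" "snd (snd v) = 0"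
    then obtain x y where "v = (x, y, 0)" by (metis prod.collapse)
    with v \<sigma> at_infinity sphere_at_infinity_nonzero[of x y] show False
      by (auto simp: sign_region_def)
  qed
  then have "\<not> nonorientable_rp2 (sign_region n c (- \<sigma>))"
    by (rule not_nonorientable_rp2_if_affine)
  with \<sigma> show ?thesis
    unfolding bminus_def by auto
qed

theorem theorem2:
  fixes c :: bpoly and n :: nat
  assumes "has_degree c n" and "n \<ge> 3"
    and "hyperbolic_form n (hom_part c n) \<or> elliptic_form n (hom_part c n)"
  shows "compact {p :: real \<times> real. peval (2 * n - 4) (hess c) (fst p) (snd p) = 0}
    \<and> (hyperbolic_form n (hom_part c n) \<longrightarrow>
         (\<forall>x y. chart x y \<in> bminus n c \<longrightarrow> peval (2 * n - 4) (hess c) x y < 0))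
    \<and> (elliptic_form n (hom_part c n) \<longrightarrow>
         (\<forall>x y. chart x y \<in> bminus n c \<longrightarrow> peval (2 * n - 4) (hess c) x y > 0))"
proof -
  let ?hyperbolic = "hyperbolic_form n (hom_part c n)" and ?elliptic = "elliptic_form n (hom_part c n)"
  have deg: "degree_le c n" "2 \<le> n"
    using assms(1,2) by (auto simp: has_degree_def degree_le_def)
  obtain \<sigma> :: real where \<sigma>: "\<sigma> = -1 \<and> ?hyperbolic \<or> \<sigma> = 1 \<and> ?elliptic"
    using assms(3) that[of "-1"] that[of 1] by auto
  have at_infinity: "sgn (Hproj n c (x, y, 0)) = \<sigma>" if "(x, y) \<noteq> (0, 0)" for x y
    using \<sigma> Hproj_at_infinity_sign[OF deg that] by auto
  have "Hproj n c (x, y, 0) \<noteq> 0" if "(x, y) \<noteq> (0, 0)" for x y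
    using at_infinity[OF that] \<sigma> by auto
  then have "compact {p :: real \<times> real. peval (2 * n - 4) (hess c) (fst p) (snd p) = 0}"
    by (intro compact_Hessian_curve) blast
  moreover have "bminus n c \<subseteq> sign_region n c \<sigma>"
    using \<sigma> at_infinity by (intro bminus_subset_sign_region) auto
  moreover have "?hyperbolic \<Longrightarrow> \<sigma> = -1" and "?elliptic \<Longrightarrow> \<sigma> = 1"
    using at_infinity[of 1 0] Hproj_at_infinity_sign[OF deg, of 1 0] by auto
  ultimately show ?thesis
    by (auto simp: chart_in_sign_region_iff sgn_1_neg sgn_1_pos)
qed

end
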